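(* Let $m\ge0$, let $f:\mathbb{R}^n\to\mathbb{R}$ be $m$-weakly convex with $f^\star:=\inf_x f(x)>-\infty$, and let $\beta\in(0,1)$, $\rho>0$, $\alpha=m+\rho$, $x_1\in\mathbb{R}^n$. Suppose the sequence $(x_k)_{k\ge1}$ is generated as follows: for each $k\ge1$ there is a convex function $\tilde f_k:\mathbb{R}^n\to\mathbb{R}$ with $\tilde f_k(x)\le f(x)+\frac m2\|x-x_k\|^2$ for all $x$, such that $x_{k+1}=\arg\min_x\{\tilde f_k(x)+\frac\rho2\|x-x_k\|^2\}$ and $$f(x_k)-\Big(f(x_{k+1})+\frac m2\|x_{k+1}-x_k\|^2\Big)\ge\beta\big(f(x_k)-\tilde f_k(x_{k+1})\big).$$ Let $\eta>0$, $\epsilon>0$. If $T$ is an integer with $$T\ge \frac{2\alpha^2(f(x_1)-f^\star)}{m+\beta\rho}\cdot\frac1{\eta^2}+\frac{(1-\beta)(f(x_1)-f^\star)}{\beta}\cdot\frac1\epsilon+1,$$ then at least one of $x_2,\dots,x_{T+1}$ is an $(\eta,\epsilon)$-inexact stationary point of $f$.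
   Context: A function $f$ is $m$-weakly convex ($m\ge 0$) if $x\mapsto f(x)+\frac{m}{2}\|x\|^2$ is convex. For $\epsilon\ge 0$, the $\epsilon$-inexact subdifferential at $x$ is $\partial_\epsilon f(x)=\{v\in\mathbb{R}^n: f(y)\ge f(x)+\langle v,y-x\rangle-\frac{m}{2}\|y-x\|^2-\epsilon\ \ \forall y\in\mathbb{R}^n\}$. A point $x$ is an $(\eta,\epsilon)$-inexact stationary point if $\mathrm{dist}(0,\partial_\epsilon f(x))\le\eta$. *)

theory Defs
  imports "HOL-Analysis.Analysis"
begin

definition weakly_convex :: "real \<Rightarrow> ('a::real_inner \<Rightarrow> real) \<Rightarrow> bool" where
  "weakly_convex m f \<longleftrightarrow> m \<ge> 0 \<and> convex_on UNIV (\<lambda>x. f x + m / 2 * (norm x)\<^sup>2)"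

definition inexact_subdiff :: "real \<Rightarrow> real \<Rightarrow> ('a::real_inner \<Rightarrow> real) \<Rightarrow> 'a \<Rightarrow> 'a set" where
  "inexact_subdiff m \<epsilon> f x =
     {v. \<forall>y. f y \<ge> f x + inner v (y - x) - m / 2 * (norm (y - x))\<^sup>2 - \<epsilon>}"

text \<open>dist(0, S) <= eta, with the convention dist(0, {}) = +infinity\<close>
definition inexact_stationary :: "real \<Rightarrow> real \<Rightarrow> real \<Rightarrow> ('a::real_inner \<Rightarrow> real) \<Rightarrow> 'a \<Rightarrow> bool" where
  "inexact_stationary m \<eta> \<epsilon> f x \<longleftrightarrow>
     inexact_subdiff m \<epsilon> f x \<noteq> {} \<and> infdist 0 (inexact_subdiff m \<epsilon> f x) \<le> \<eta>"

end

theory Submission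
  imports Defs
begin

text \<open>
  A step \<open>x\<^sub>k \<mapsto> x\<^sub>k\<^sub>+\<^sub>1\<close> is a proximal step on a convex model \<open>g\<close> of \<open>f\<close>. Its optimality condition
  makes \<open>(m + \<rho>)(x\<^sub>k - x\<^sub>k\<^sub>+\<^sub>1)\<close> an \<open>e\<^sub>k\<close>-inexact subgradient of \<open>f\<close> at \<open>x\<^sub>k\<^sub>+\<^sub>1\<close>, where
  \<open>e\<^sub>k = f(x\<^sub>k\<^sub>+\<^sub>1) + m/2 \<parallel>x\<^sub>k\<^sub>+\<^sub>1 - x\<^sub>k\<parallel>\<^sup>2 - g(x\<^sub>k\<^sub>+\<^sub>1)\<close> is the model gap. The descent condition
  makes the decrease \<open>f(x\<^sub>k) - f(x\<^sub>k\<^sub>+\<^sub>1)\<close> dominate both \<open>(m + \<beta>\<rho>)/2 \<parallel>x\<^sub>k\<^sub>+\<^sub>1 - x\<^sub>k\<parallel>\<^sup>2\<close>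
  and \<open>\<beta> e\<^sub>k / (1 - \<beta>)\<close>. Hence every step ending at a non-stationary point decreases \<open>f\<close>
  by at least \<open>min c\<^sub>1 c\<^sub>2\<close> with \<open>c\<^sub>1 = (m + \<beta>\<rho>)\<eta>\<^sup>2 / (2\<alpha>\<^sup>2)\<close> and \<open>c\<^sub>2 = \<beta>\<epsilon> / (1 - \<beta>)\<close>,
  and telescoping against \<open>f\<^sup>\<star>\<close> allows fewer than \<open>T\<close> such steps.
\<close>

lemma prox_optimality_subgradient:
  fixes g :: "'a::real_inner \<Rightarrow> real"
  assumes cvx: "convex_on UNIV g" and rho: "\<rho> > 0"
    and min: "\<And>y. g z + \<rho> / 2 * (norm (z - c))\<^sup>2 \<le> g y + \<rho> / 2 * (norm (y - c))\<^sup>2"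
  shows "g y \<ge> g z + \<rho> * inner (c - z) (y - z)"
proof -
  define w where "w = y - z"
  have step: "g z + \<rho> * inner (c - z) w \<le> g y + t * (\<rho> / 2 * (norm w)\<^sup>2)"
    if t: "0 < t" "t < 1" for t
  proof -
    have "g z + \<rho> / 2 * (norm (z - c))\<^sup>2
        \<le> g (z + t *\<^sub>R w) + \<rho> / 2 * (norm ((z - c) + t *\<^sub>R w))\<^sup>2"
      using min[of "z + t *\<^sub>R w"] by (simp add: algebra_simps)
    also have "(norm ((z - c) + t *\<^sub>R w))\<^sup>2
        = (norm (z - c))\<^sup>2 + 2 * t * inner (z - c) w + t\<^sup>2 * (norm w)\<^sup>2"
      unfolding power2_norm_eq_inner
      by (simp add: inner_add_left inner_add_right inner_commute algebra_simps power2_eq_square)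
    also have "g (z + t *\<^sub>R w) \<le> (1 - t) * g z + t * g y"
      using convex_onD[OF cvx, of t z y] t by (simp add: w_def algebra_simps)
    finally have "t * (g z + \<rho> * inner (c - z) w) \<le> t * (g y + t * (\<rho> / 2 * (norm w)\<^sup>2))"
      by (simp add: algebra_simps power2_eq_square inner_diff_left)
    then show ?thesis using t by simp
  qed
  have "((\<lambda>t. g y + t * (\<rho> / 2 * (norm w)\<^sup>2)) \<longlongrightarrow> g y) (at_right 0)"
    by (auto intro!: tendsto_eq_intros)
  moreover have "eventually
      (\<lambda>t. g z + \<rho> * inner (c - z) w \<le> g y + t * (\<rho> / 2 * (norm w)\<^sup>2)) (at_right 0)"
    unfolding eventually_at_right_field using step by (intro exI[of _ 1]) auto
  ultimately have "g z + \<rho> * inner (c - z) w \<le> g y"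
    by (rule tendsto_lowerbound) simp
  then show ?thesis by (simp add: w_def)
qed

lemma prox_step_inexact_subgradient:
  fixes f g :: "'a::real_inner \<Rightarrow> real"
  assumes cvx: "convex_on UNIV g" and rho: "\<rho> > 0"
    and g_le: "\<And>y. g y \<le> f y + m / 2 * (norm (y - x))\<^sup>2"
    and g_min: "\<And>y. g x' + \<rho> / 2 * (norm (x' - x))\<^sup>2 \<le> g y + \<rho> / 2 * (norm (y - x))\<^sup>2"
  shows "(m + \<rho>) *\<^sub>R (x - x')
           \<in> inexact_subdiff m (f x' + m / 2 * (norm (x' - x))\<^sup>2 - g x') f x'"
  unfolding inexact_subdiff_def
proof (intro CollectI allI)
  fix y
  define I where "I = inner (x - x') (y - x')"
  have "g y \<ge> g x' + \<rho> * I"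
    unfolding I_def using prox_optimality_subgradient[OF cvx rho g_min] .
  moreover have "(norm (y - x))\<^sup>2 = (norm (y - x'))\<^sup>2 - 2 * I + (norm (x' - x))\<^sup>2"
    unfolding I_def power2_norm_eq_inner
    by (simp add: inner_diff_left inner_diff_right inner_commute algebra_simps)
  then have "m / 2 * (norm (y - x))\<^sup>2
      = m / 2 * (norm (y - x'))\<^sup>2 - m * I + m / 2 * (norm (x' - x))\<^sup>2"
    by (simp add: right_diff_distrib distrib_left)
  moreover have "inner ((m + \<rho>) *\<^sub>R (x - x')) (y - x') = m * I + \<rho> * I"
    by (simp add: I_def algebra_simps)
  ultimately show "f y \<ge> f x' + inner ((m + \<rho>) *\<^sub>R (x - x')) (y - x')
      - m / 2 * (norm (y - x'))\<^sup>2 - (f x' + m / 2 * (norm (x' - x))\<^sup>2 - g x')"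
    using g_le[of y] by linarith
qed

lemma prox_step_sufficient_decrease:
  fixes f g :: "'a::real_normed_vector \<Rightarrow> real"
  assumes beta: "\<beta> \<ge> 0"
    and g_le: "g x \<le> f x"
    and g_min: "g x' + \<rho> / 2 * (norm (x' - x))\<^sup>2 \<le> g x"
    and descent: "f x - (f x' + m / 2 * (norm (x' - x))\<^sup>2) \<ge> \<beta> * (f x - g x')"
  shows "f x - f x' \<ge> (m + \<beta> * \<rho>) / 2 * (norm (x' - x))\<^sup>2"
proof -
  have "\<beta> * (\<rho> / 2 * (norm (x' - x))\<^sup>2) \<le> \<beta> * (f x - g x')"
    using g_le g_min beta by (intro mult_left_mono) auto
  moreover have "(m + \<beta> * \<rho>) / 2 * (norm (x' - x))\<^sup>2
      = m / 2 * (norm (x' - x))\<^sup>2 + \<beta> * (\<rho> / 2 * (norm (x' - x))\<^sup>2)"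
    by (simp add: algebra_simps)
  ultimately show ?thesis using descent by linarith
qed

lemma prox_step_model_gap_bound:
  fixes f g :: "'a::real_normed_vector \<Rightarrow> real"
  assumes m: "m \<ge> 0" and beta: "\<beta> \<le> 1"
    and descent: "f x - (f x' + m / 2 * (norm (x' - x))\<^sup>2) \<ge> \<beta> * (f x - g x')"
  shows "\<beta> * (f x' + m / 2 * (norm (x' - x))\<^sup>2 - g x') \<le> (1 - \<beta>) * (f x - f x')"
proof -
  have "0 \<le> (1 - \<beta>) * (m / 2 * (norm (x' - x))\<^sup>2)"
    using m beta by simp
  then show ?thesis using descent by (simp add: algebra_simps)
qed

lemma inexact_subdiff_mono:
  assumes "e \<le> \<epsilon>"
  shows "inexact_subdiff m e f x \<subseteq> inexact_subdiff m \<epsilon> f x"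
  unfolding inexact_subdiff_def using assms by (auto intro: order.trans[rotated])

lemma inexact_stationaryI:
  assumes "v \<in> inexact_subdiff m e f x" "e \<le> \<epsilon>" "norm v \<le> \<eta>"
  shows "inexact_stationary m \<eta> \<epsilon> f x"
proof -
  have "v \<in> inexact_subdiff m \<epsilon> f x"
    using assms(1) inexact_subdiff_mono[OF assms(2)] by blast
  then show ?thesis
    unfolding inexact_stationary_def using infdist_le2[of v _ 0] assms(3) by auto
qed

lemma prox_step_progress:
  fixes f g :: "'a::real_inner \<Rightarrow> real"
  assumes m: "m \<ge> 0" and beta: "0 < \<beta>" "\<beta> < 1" and rho: "\<rho> > 0" and eta: "\<eta> \<ge> 0"
    and cvx: "convex_on UNIV g"
    and g_le: "\<And>y. g y \<le> f y + m / 2 * (norm (y - x))\<^sup>2"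
    and g_min: "\<And>y. g x' + \<rho> / 2 * (norm (x' - x))\<^sup>2 \<le> g y + \<rho> / 2 * (norm (y - x))\<^sup>2"
    and descent: "f x - (f x' + m / 2 * (norm (x' - x))\<^sup>2) \<ge> \<beta> * (f x - g x')"
    and not_stationary: "\<not> inexact_stationary m \<eta> \<epsilon> f x'"
  shows "min ((m + \<beta> * \<rho>) * \<eta>\<^sup>2 / (2 * (m + \<rho>)\<^sup>2)) (\<beta> * \<epsilon> / (1 - \<beta>)) \<le> f x - f x'"
proof -
  define e where "e = f x' + m / 2 * (norm (x' - x))\<^sup>2 - g x'"
  have decrease: "f x - f x' \<ge> (m + \<beta> * \<rho>) / 2 * (norm (x' - x))\<^sup>2"
    using prox_step_sufficient_decrease[of \<beta> g x f x' \<rho> m] beta g_le[of x] g_min[of x] descent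
    by simp
  have "(m + \<rho>) *\<^sub>R (x - x') \<in> inexact_subdiff m e f x'"
    unfolding e_def using prox_step_inexact_subgradient[OF cvx rho g_le g_min] .
  moreover have "norm ((m + \<rho>) *\<^sub>R (x - x')) = (m + \<rho>) * norm (x' - x)"
    using m rho by (simp add: norm_minus_commute)
  ultimately have "\<eta> < (m + \<rho>) * norm (x' - x) \<or> \<epsilon> < e"
    using inexact_stationaryI not_stationary by (metis not_le)
  then show ?thesis
  proof
    assume "\<eta> < (m + \<rho>) * norm (x' - x)"
    then have "\<eta>\<^sup>2 < (m + \<rho>)\<^sup>2 * (norm (x' - x))\<^sup>2"
      using eta power_strict_mono[of \<eta> "(m + \<rho>) * norm (x' - x)" 2]
      by (simp add: power_mult_distrib)
    then have "\<eta>\<^sup>2 / (m + \<rho>)\<^sup>2 \<le> (norm (x' - x))\<^sup>2"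
      using m rho by (simp add: field_simps power_mult_distrib)
    then have "(m + \<beta> * \<rho>) / 2 * (\<eta>\<^sup>2 / (m + \<rho>)\<^sup>2)
        \<le> (m + \<beta> * \<rho>) / 2 * (norm (x' - x))\<^sup>2"
      using m beta rho by (intro mult_left_mono) auto
    moreover have "(m + \<beta> * \<rho>) * \<eta>\<^sup>2 / (2 * (m + \<rho>)\<^sup>2)
        = (m + \<beta> * \<rho>) / 2 * (\<eta>\<^sup>2 / (m + \<rho>)\<^sup>2)"
      by simp
    ultimately have "(m + \<beta> * \<rho>) * \<eta>\<^sup>2 / (2 * (m + \<rho>)\<^sup>2) \<le> f x - f x'"
      using decrease by linarith
    then show ?thesis by (simp add: min_le_iff_disj)
  next
    assume "\<epsilon> < e"
    then have "\<beta> * \<epsilon> \<le> \<beta> * e"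
      using beta by simp
    also have "\<dots> \<le> (1 - \<beta>) * (f x - f x')"
      unfolding e_def using prox_step_model_gap_bound[where g = g] m beta descent by simp
    finally have "\<beta> * \<epsilon> / (1 - \<beta>) \<le> f x - f x'"
      using beta by (simp add: field_simps)
    then show ?thesis by (simp add: min_le_iff_disj)
  qed
qed

lemma sum_steps_le_telescoping:
  fixes a :: "nat \<Rightarrow> real"
  assumes "\<And>k. k \<in> {1..T} \<Longrightarrow> \<delta> \<le> a k - a (Suc k)"
  shows "real T * \<delta> \<le> a 1 - a (Suc T)"
proof -
  have "real T * \<delta> = (\<Sum>k=1..T. \<delta>)" by simp
  also have "\<dots> \<le> (\<Sum>k=1..T. a k - a (Suc k))" using assms by (rule sum_mono)
  also have "\<dots> = a 1 - a (Suc T)"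
    using sum_Suc_diff[of 1 T "\<lambda>k. - a k"] by simp
  finally show ?thesis .
qed

theorem mainTheorem6:
  fixes f :: "'a::euclidean_space \<Rightarrow> real"
    and ft :: "nat \<Rightarrow> 'a \<Rightarrow> real"
    and x :: "nat \<Rightarrow> 'a"
    and m \<beta> \<rho> \<eta> \<epsilon> :: real
    and T :: nat
  assumes m: "m \<ge> 0"
    and wc: "weakly_convex m f"
    and bdd: "bdd_below (range f)"
    and beta: "0 < \<beta>" "\<beta> < 1"
    and rho: "\<rho> > 0"
    and ft_convex: "\<And>k. k \<ge> 1 \<Longrightarrow> convex_on UNIV (ft k)"
    and ft_le: "\<And>k y. k \<ge> 1 \<Longrightarrow> ft k y \<le> f y + m / 2 * (norm (y - x k))\<^sup>2"
    and argmin: "\<And>k y. k \<ge> 1 \<Longrightarrow>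
        ft k (x (Suc k)) + \<rho> / 2 * (norm (x (Suc k) - x k))\<^sup>2
          \<le> ft k y + \<rho> / 2 * (norm (y - x k))\<^sup>2"
    and descent: "\<And>k. k \<ge> 1 \<Longrightarrow>
        f (x k) - (f (x (Suc k)) + m / 2 * (norm (x (Suc k) - x k))\<^sup>2)
          \<ge> \<beta> * (f (x k) - ft k (x (Suc k)))"
    and eta: "\<eta> > 0" and eps: "\<epsilon> > 0"
    and T: "real T \<ge> 2 * (m + \<rho>)\<^sup>2 * (f (x 1) - Inf (range f)) / (m + \<beta> * \<rho>) * (1 / \<eta>\<^sup>2)
                 + (1 - \<beta>) * (f (x 1) - Inf (range f)) / \<beta> * (1 / \<epsilon>) + 1"
  shows "\<exists>k\<in>{2..T+1}. inexact_stationary m \<eta> \<epsilon> f (x k)"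
proof (rule ccontr)
  assume no_stationary: "\<not> (\<exists>k\<in>{2..T+1}. inexact_stationary m \<eta> \<epsilon> f (x k))"
  define c1 where "c1 = (m + \<beta> * \<rho>) * \<eta>\<^sup>2 / (2 * (m + \<rho>)\<^sup>2)"
  define c2 where "c2 = \<beta> * \<epsilon> / (1 - \<beta>)"
  define \<Delta> where "\<Delta> = f (x 1) - Inf (range f)"
  have "m + \<beta> * \<rho> > 0"
    using m beta rho by (simp add: add_nonneg_pos)
  then have c_pos: "c1 > 0" "c2 > 0"
    using m beta rho eta eps by (simp_all add: c1_def c2_def)
  have "min c1 c2 \<le> f (x k) - f (x (Suc k))" if k: "k \<in> {1..T}" for k
    unfolding c1_def c2_def
    using k no_stationary eta
    by (intro prox_step_progress[OF m beta rho _ ft_convex ft_le argmin descent]) auto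
  then have "real T * min c1 c2 \<le> f (x 1) - f (x (Suc T))"
    by (rule sum_steps_le_telescoping)
  also have "\<dots> \<le> \<Delta>"
    unfolding \<Delta>_def using cInf_lower[OF _ bdd] by simp
  finally have steps: "real T * min c1 c2 \<le> \<Delta>" .
  have "\<Delta> \<ge> 0"
    unfolding \<Delta>_def using cInf_lower[OF _ bdd] by simp
  then have "\<Delta> / min c1 c2 \<le> \<Delta> / c1 + \<Delta> / c2"
    using c_pos by (auto simp: min_def)
  moreover have "\<Delta> / c1 + \<Delta> / c2 + 1 \<le> real T"
    using T c_pos unfolding c1_def c2_def \<Delta>_def by (simp add: field_simps)
  ultimately have "\<Delta> / min c1 c2 + 1 \<le> real T"
    by linarith
  then show False
    using steps c_pos by (simp add: field_simps)
qed

end
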